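(* Let $S\ge0$ be an integer and let $\mathbf a=(a_1,\dots,a_m)$ be a partition. Then there exists a partition $\mathbf g=(g_1,\dots,g_{m+1})$ such that $\sum_{i=1}^{m+1}g_i=S$ and $\mathbf g\prec'\mathbf a$.
   Context: A partition is a nonincreasing finite sequence of nonnegative integers. 1-step generalized majorization: for nonincreasing integer sequences $\mathbf g=(g_1,\dots,g_{m+1})$ and $\mathbf a=(a_1,\dots,a_m)$, set $a_{m+1}=-\infty$ and $h=\min\{i: a_i<g_i\}$; then $\mathbf g\prec'\mathbf a$ means $a_i=g_{i+1}$ for all $h\le i\le m$. *)

theory Defs
  imports Main
begin

text \<open>A partition: a nonincreasing finite sequence of nonnegative integers,
  represented as a list of naturals (entry i of the list is the (i+1)-th part).\<close>
definition is_partition :: "nat list \<Rightarrow> bool" where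
  "is_partition xs \<longleftrightarrow> sorted_wrt (\<ge>) xs"

text \<open>With a at position m equal to minus infinity, the index
  h is the least i with i = m or a!i < g!i; the condition says a!i = g!(i+1)
  for all h \<le> i < m.\<close>
definition gen_maj1 :: "int list \<Rightarrow> int list \<Rightarrow> bool" where
  "gen_maj1 g a \<longleftrightarrow>
     length g = length a + 1 \<and> sorted_wrt (\<ge>) g \<and> sorted_wrt (\<ge>) a \<and>
     (let h = (LEAST i. i = length a \<or> (i < length a \<and> a ! i < g ! i))
      in \<forall>i. h \<le> i \<and> i < length a \<longrightarrow> a ! i = g ! (i + 1))"

end

theory Submission
  imports Defs
begin

text \<open>Write \<open>|a|\<close> for the sum of the parts of \<open>a\<close>. If \<open>S \<le> |a|\<close>, fill the
  parts of \<open>a\<close> greedily up to total \<open>S\<close> and append a zero: then \<open>g \<le> a\<close> entrywise,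
  so \<open>h = m + 1\<close> and the majorization condition is vacuous. If \<open>S > |a|\<close>, insert
  the excess \<open>S - |a|\<close> into \<open>a\<close> at its sorted position \<open>k\<close>: then \<open>g\<close> agrees with
  \<open>a\<close> before \<open>k\<close>, so \<open>h \<ge> k\<close>, and from \<open>k\<close> on \<open>a\<close> is \<open>g\<close> shifted by one.\<close>

lemma sorted_wrt_map_int: "sorted_wrt (\<ge>) (map int xs) \<longleftrightarrow> sorted_wrt (\<ge>) xs"
  by (simp add: sorted_wrt_map)

lemma gen_maj1I:
  fixes g a :: "int list"
  assumes "length g = length a + 1" "sorted_wrt (\<ge>) g" "sorted_wrt (\<ge>) a"
    and "k \<le> length a"
    and below: "\<And>i. i < k \<Longrightarrow> g ! i \<le> a ! i"
    and shifted: "\<And>i. k \<le> i \<Longrightarrow> i < length a \<Longrightarrow> a ! i = g ! (i + 1)"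
  shows "gen_maj1 g a"
proof -
  have "k \<le> (LEAST i. i = length a \<or> (i < length a \<and> a ! i < g ! i))"
  proof (rule LeastI2[where a = "length a"])
    fix h assume "h = length a \<or> (h < length a \<and> a ! h < g ! h)"
    then show "k \<le> h"
      using \<open>k \<le> length a\<close> below by (metis leI not_less)
  qed simp
  then show ?thesis
    using assms(1-3) shifted unfolding gen_maj1_def Let_def by auto
qed

fun greedy_fill :: "nat \<Rightarrow> nat list \<Rightarrow> nat list" where
  "greedy_fill s [] = []"
| "greedy_fill s (x # xs) = min s x # greedy_fill (s - min s x) xs"

lemma length_greedy_fill [simp]: "length (greedy_fill s xs) = length xs"
  by (induction s xs rule: greedy_fill.induct) auto

lemma sum_list_greedy_fill: "sum_list (greedy_fill s xs) = min s (sum_list xs)"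
  by (induction s xs rule: greedy_fill.induct) (auto simp: min_def)

lemma greedy_fill_nth_le: "i < length xs \<Longrightarrow> greedy_fill s xs ! i \<le> xs ! i"
  by (induction s xs arbitrary: i rule: greedy_fill.induct) (auto simp: nth_Cons split: nat.splits)

lemma greedy_fill_le_amount: "y \<in> set (greedy_fill s xs) \<Longrightarrow> y \<le> s"
  by (induction s xs rule: greedy_fill.induct) (auto intro: order_trans[OF _ diff_le_self])

lemma greedy_fill_le_member:
  assumes "y \<in> set (greedy_fill s xs)"
  obtains x where "x \<in> set xs" "y \<le> x"
proof -
  from assms obtain i where "i < length xs" "y = greedy_fill s xs ! i"
    by (auto simp: in_set_conv_nth)
  with greedy_fill_nth_le show thesis by (intro that[of "xs ! i"]) auto
qed

lemma sorted_greedy_fill: "sorted_wrt (\<ge>) xs \<Longrightarrow> sorted_wrt (\<ge>) (greedy_fill s xs)"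
proof (induction s xs rule: greedy_fill.induct)
  case (2 s x xs)
  from "2.prems" have x_max: "\<forall>u \<in> set xs. u \<le> x" and "sorted_wrt (\<ge>) xs" by simp_all
  have "y \<le> min s x" if y: "y \<in> set (greedy_fill (s - min s x) xs)" for y
  proof -
    obtain x' where "x' \<in> set xs" "y \<le> x'"
      using y by (rule greedy_fill_le_member)
    with x_max have "y \<le> x" by auto
    moreover have "y \<le> s" using greedy_fill_le_amount[OF y] by linarith
    ultimately show ?thesis by simp
  qed
  with "2.IH" \<open>sorted_wrt (\<ge>) xs\<close> show ?case
    unfolding greedy_fill.simps sorted_wrt.simps(2) by blast
qed simp

lemma sorted_split_at_threshold:
  fixes y :: "'a :: linorder"
  assumes "sorted_wrt (\<ge>) a"
  obtains t d where "a = t @ d" "\<forall>u \<in> set t. y \<le> u" "\<forall>v \<in> set d. v < y"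
proof
  let ?d = "dropWhile (\<lambda>x. y \<le> x) a"
  show "a = takeWhile (\<lambda>x. y \<le> x) a @ ?d" by simp
  show "\<forall>u \<in> set (takeWhile (\<lambda>x. y \<le> x) a). y \<le> u"
    by (auto dest: set_takeWhileD)
  show "\<forall>v \<in> set ?d. v < y"
  proof (cases ?d)
    case (Cons z zs)
    have "z < y" using hd_dropWhile[of "\<lambda>x. y \<le> x" a] Cons by auto
    moreover have "sorted_wrt (\<ge>) ?d"
      using assms by (metis sorted_wrt_append takeWhile_dropWhile_id)
    ultimately show ?thesis using Cons by auto
  qed (simp del: dropWhile_eq_Nil_conv)
qed

lemma gen_maj1_greedy_fill:
  assumes "sorted_wrt (\<ge>) a" "S \<le> sum_list a"
  shows "\<exists>g. sorted_wrt (\<ge>) g \<and> length g = length a + 1 \<and> sum_list g = S \<and>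
             gen_maj1 (map int g) (map int a)"
proof (intro exI conjI)
  let ?g = "greedy_fill S a @ [0]"
  show sorted: "sorted_wrt (\<ge>) ?g"
    using sorted_greedy_fill[OF assms(1)] by (simp add: sorted_wrt_append)
  show "length ?g = length a + 1" by simp
  show "sum_list ?g = S" using assms(2) by (simp add: sum_list_greedy_fill)
  show "gen_maj1 (map int ?g) (map int a)"
  proof (rule gen_maj1I[where k = "length a"])
    show "sorted_wrt (\<ge>) (map int ?g)" using sorted by (simp only: sorted_wrt_map_int)
    show "sorted_wrt (\<ge>) (map int a)" using assms(1) by (simp only: sorted_wrt_map_int)
    show "map int ?g ! i \<le> map int a ! i" if "i < length a" for i
      using that by (simp add: nth_append greedy_fill_nth_le)
  qed simp_all
qed

lemma gen_maj1_insert: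
  assumes "sorted_wrt (\<ge>) a"
  shows "\<exists>g. sorted_wrt (\<ge>) g \<and> length g = length a + 1 \<and> sum_list g = sum_list a + y \<and>
             gen_maj1 (map int g) (map int a)"
proof -
  obtain t d where a: "a = t @ d" and t: "\<forall>u \<in> set t. y \<le> u" and d: "\<forall>v \<in> set d. v < y"
    using sorted_split_at_threshold[OF assms] .
  let ?g = "t @ y # d"
  have sorted: "sorted_wrt (\<ge>) ?g"
    using assms t d unfolding a by (auto simp: sorted_wrt_append)
  have "gen_maj1 (map int ?g) (map int a)"
  proof (rule gen_maj1I[where k = "length t"])
    show "sorted_wrt (\<ge>) (map int ?g)" using sorted by (simp only: sorted_wrt_map_int)
    show "sorted_wrt (\<ge>) (map int a)" using assms by (simp only: sorted_wrt_map_int)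
    show "map int ?g ! i \<le> map int a ! i" if "i < length t" for i
      using that by (simp add: a nth_append)
    show "map int a ! i = map int ?g ! (i + 1)" if "length t \<le> i" for i
      using that by (simp add: a nth_append Suc_diff_le)
  qed (simp_all add: a)
  with sorted show ?thesis by (intro exI[of _ ?g]) (simp add: a)
qed

theorem lemma5p1:
  fixes S :: nat and a :: "nat list"
  assumes "is_partition a"
  shows "\<exists>g. is_partition g \<and> length g = length a + 1 \<and> sum_list g = S \<and>
             gen_maj1 (map int g) (map int a)"
proof (cases "S \<le> sum_list a")
  case True
  with assms show ?thesis
    unfolding is_partition_def by (rule gen_maj1_greedy_fill)
next
  case False
  with gen_maj1_insert[of a "S - sum_list a"] assms show ?thesis
    unfolding is_partition_def by simp
qed

end
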